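(* Let $(p_{n,m})_{n,m\in\omega}$ be a matrix of terms such that: (1) each $p_{n,m}$ depends only on variables $x_{i,j}$ with $i<n$; (2) for every $n$ there are infinitely many $m$ with $p_{n,m}=^*0$ (the constant term); (3) for all $i,j$ there are infinitely many $n$ such that for every $M\in\omega$ there are $m_0,\dots,m_k>M$ such that $x_{i,j}$ is determined by $p_{n,m_0},\dots,p_{n,m_k}$. Then there is $q\in R_{\omega\cdot\omega+\omega}$ with $\sigma(q)=\bar p$, i.e. $q_{n,m}=p_{n,m}$ for all $n,m\in\omega$.
   Context: Throughout, $\delta$ denotes a nonzero countable limit ordinal. Terms: variables are $x_{l,k}$ ($l,k\in\omega$), each taking values in $\{0,1\}$. A term $t$ is given by a finite sequence of variables $(v_0,\dots,v_{r-1})$ and a function $F:2^r\to2$; a variable $v$ is identified with the term $((v),\mathrm{id})$. An assignment $a$ maps variables to $\{0,1\}$ and extends to terms by $t\circ a=F(v_0\circ a,\dots,v_{r-1}\circ a)$. Terms are identified modulo $t=^*s$ iff $t\circ a=s\circ a$ for all assignments $a$. A term depends only on variables in $Y$ if it is $=^*$ to a term using only variables from $Y$. A term or variable $s$ is determined by terms $t_0,\dots,t_n$ if for all assignments $a,b$, $(t_i\circ a)_{i\le n}=(t_i\circ b)_{i\le n}$ implies $s\circ a=s\circ b$. The forcing $\tilde P$: a condition $\tilde p$ has height $\mathrm{ht}(\tilde p)<\omega_1$ and consists of, for every limit $\delta<\mathrm{ht}(\tilde p)$ and $n,m,k\in\omega$: a cofinal $\nu_{\delta,n,m}\subseteq\delta$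 of order type $\omega$, with $\nu_{\delta,n,m_1}\cap\nu_{\delta,n,m_2}=\emptyset$ for $m_1\ne m_2$; a strictly increasing $j_{\delta,n,m}:\omega\to\omega$; and a surjective $f_{\delta,n,m,k}:2^{[j_{\delta,n,m}(k),\,j_{\delta,n,m}(k+1)-1]}\to2$; ordered by extension. For $\eta$ into $2$ with domain containing $\nu_{\delta,n,m}$, with $\zeta_i$ the $i$-th element of $\nu_{\delta,n,m}$, $g_{\delta,n,m,k}(\eta)=f_{\delta,n,m,k}((\eta(\zeta_i))_{j_{\delta,n,m}(k)\le i<j_{\delta,n,m}(k+1)})$. The set $R$: $R=\bigcup_{\delta<\omega_1}R_{\delta+\omega}$, where $p\in R_{\delta+\omega}$ consists of $\tilde p\in\tilde P$ with $\mathrm{ht}(\tilde p)=\delta+1$ and terms $\bar p=(p_{n,\alpha})_{n\in\omega,\alpha<\delta+\omega}$ such that $p_{n,\delta+m}=x_{n,m}$; for $\alpha<\delta$, $p_{n,\alpha}$ depends only on variables $x_{l,k}$ with $l<n$; and for all $n,m\in\omega$ and all limit $\alpha\le\delta$ there is $k_0$ such that for every assignment $a$, $p_{n,\alpha+m}\circ a=g_{\alpha,n,m,k}((p_{n+1,\zeta}\circ a)_{\zeta<\alpha})$ for all $k\ge k_0$ (computed from $\tilde p$). For $p\in R$, $\sigma(p)=(p_{n,m})_{n,m\in\omega}$. *)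

theory Defs
  imports Main
begin

text \<open>A term is represented
semantically, i.e. already modulo =^*: a map from assignments to bool which is
induced by a finite sequence of variables (v_0,...,v_{r-1}) and F : 2^r -> 2.\<close>

type_synonym assignment = "nat \<Rightarrow> nat \<Rightarrow> bool"
type_synonym trm = "assignment \<Rightarrow> bool"

definition term_of :: "(nat \<times> nat) list \<Rightarrow> (bool list \<Rightarrow> bool) \<Rightarrow> trm" where
  "term_of vs F = (\<lambda>a. F (map (\<lambda>(l, k). a l k) vs))"

definition is_term :: "trm \<Rightarrow> bool" where
  "is_term t \<longleftrightarrow> (\<exists>vs F. t = term_of vs F)"

definition var :: "nat \<Rightarrow> nat \<Rightarrow> trm" where
  "var l k = (\<lambda>a. a l k)"

definition zero_term :: trm where
  "zero_term = (\<lambda>a. False)"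

definition depends_only :: "trm \<Rightarrow> (nat \<times> nat) set \<Rightarrow> bool" where
  "depends_only t Y \<longleftrightarrow> (\<exists>vs F. set vs \<subseteq> Y \<and> t = term_of vs F)"

definition determined :: "trm \<Rightarrow> trm list \<Rightarrow> bool" where
  "determined s ts \<longleftrightarrow>
     (\<forall>a b. map (\<lambda>t. t a) ts = map (\<lambda>t. t b) ts \<longrightarrow> s a = s b)"

text \<open>Fin a b encodes omega*a + b, Top b encodes omega*omega + b.\<close>
datatype ord = Fin nat nat | Top nat

fun olt :: "ord \<Rightarrow> ord \<Rightarrow> bool" where
  "olt (Fin a b) (Fin c d) \<longleftrightarrow> a < c \<or> (a = c \<and> b < d)"
| "olt (Fin a b) (Top d) \<longleftrightarrow> True"
| "olt (Top b) (Fin c d) \<longleftrightarrow> False"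
| "olt (Top b) (Top d) \<longleftrightarrow> b < d"

fun is_limit :: "ord \<Rightarrow> bool" where
  "is_limit (Fin a b) \<longleftrightarrow> 0 < a \<and> b = 0"
| "is_limit (Top b) \<longleftrightarrow> b = 0"

fun oplus :: "ord \<Rightarrow> nat \<Rightarrow> ord" where
  "oplus (Fin a b) m = Fin a (b + m)"
| "oplus (Top b) m = Top (b + m)"

abbreviation delta :: ord where "delta \<equiv> Top 0"

text \<open>nu alpha n m is the increasing enumeration (zeta_i)_i of nu_{alpha,n,m};
j alpha n m is j_{alpha,n,m}; f alpha n m k is f_{alpha,n,m,k}, acting on
functions nat => bool of which only the values on [j(k), j(k+1)-1] matter.\<close>

definition cond_ok ::
  "ord \<Rightarrow> (ord \<Rightarrow> nat \<Rightarrow> nat \<Rightarrow> nat \<Rightarrow> ord) \<Rightarrow> (ord \<Rightarrow> nat \<Rightarrow> nat \<Rightarrow> nat \<Rightarrow> nat)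
    \<Rightarrow> (ord \<Rightarrow> nat \<Rightarrow> nat \<Rightarrow> nat \<Rightarrow> (nat \<Rightarrow> bool) \<Rightarrow> bool) \<Rightarrow> bool" where
  "cond_ok ht \<nu> j f \<longleftrightarrow>
    (\<forall>\<alpha>. is_limit \<alpha> \<and> olt \<alpha> ht \<longrightarrow>
      (\<forall>n m. (\<forall>i i'. i < i' \<longrightarrow> olt (\<nu> \<alpha> n m i) (\<nu> \<alpha> n m i'))
          \<and> (\<forall>i. olt (\<nu> \<alpha> n m i) \<alpha>)
          \<and> (\<forall>\<beta>. olt \<beta> \<alpha> \<longrightarrow> (\<exists>i. \<not> olt (\<nu> \<alpha> n m i) \<beta>))
          \<and> strict_mono (j \<alpha> n m)
          \<and> (\<forall>k. (\<forall>\<eta> \<eta>'. (\<forall>i. j \<alpha> n m k \<le> i \<and> i < j \<alpha> n m (Suc k) \<longrightarrow> \<eta> i = \<eta>' i)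
                     \<longrightarrow> f \<alpha> n m k \<eta> = f \<alpha> n m k \<eta>')
                 \<and> (\<exists>\<eta>. f \<alpha> n m k \<eta>) \<and> (\<exists>\<eta>. \<not> f \<alpha> n m k \<eta>)))
      \<and> (\<forall>n m1 m2. m1 \<noteq> m2 \<longrightarrow> range (\<nu> \<alpha> n m1) \<inter> range (\<nu> \<alpha> n m2) = {}))"

definition gfun ::
  "(ord \<Rightarrow> nat \<Rightarrow> nat \<Rightarrow> nat \<Rightarrow> ord)
    \<Rightarrow> (ord \<Rightarrow> nat \<Rightarrow> nat \<Rightarrow> nat \<Rightarrow> (nat \<Rightarrow> bool) \<Rightarrow> bool)
    \<Rightarrow> ord \<Rightarrow> nat \<Rightarrow> nat \<Rightarrow> nat \<Rightarrow> (ord \<Rightarrow> bool) \<Rightarrow> bool" where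
  "gfun \<nu> f \<alpha> n m k \<eta> = f \<alpha> n m k (\<lambda>i. \<eta> (\<nu> \<alpha> n m i))"

text \<open>(nu, j, f, P) is an element of R_{delta+omega} for delta = omega*omega:
the condition has height delta+1 and P n alpha = p_{n,alpha} for alpha < delta+omega
(every value of type ord is below delta+omega).\<close>
definition in_R_delta_omega ::
  "(ord \<Rightarrow> nat \<Rightarrow> nat \<Rightarrow> nat \<Rightarrow> ord) \<Rightarrow> (ord \<Rightarrow> nat \<Rightarrow> nat \<Rightarrow> nat \<Rightarrow> nat)
    \<Rightarrow> (ord \<Rightarrow> nat \<Rightarrow> nat \<Rightarrow> nat \<Rightarrow> (nat \<Rightarrow> bool) \<Rightarrow> bool)
    \<Rightarrow> (nat \<Rightarrow> ord \<Rightarrow> trm) \<Rightarrow> bool" where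
  "in_R_delta_omega \<nu> j f P \<longleftrightarrow>
     cond_ok (oplus delta 1) \<nu> j f
   \<and> (\<forall>n \<alpha>. is_term (P n \<alpha>))
   \<and> (\<forall>n m. P n (oplus delta m) = var n m)
   \<and> (\<forall>n \<alpha>. olt \<alpha> delta \<longrightarrow> depends_only (P n \<alpha>) {(l, k). l < n})
   \<and> (\<forall>n m \<alpha>. is_limit \<alpha> \<and> \<not> olt delta \<alpha> \<longrightarrow>
        (\<exists>k0. \<forall>a k. k0 \<le> k \<longrightarrow>
           P n (oplus \<alpha> m) a = gfun \<nu> f \<alpha> n m k (\<lambda>\<zeta>. P (Suc n) \<zeta> a)))"

end

theory Submission
  imports Defs "HOL-Library.Nat_Bijection" "HOL-Library.Infinite_Set"
begin

(*
  Let D i j be the set of rows n in which x_{i,j} is determined by finitely many entries of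
  row n of p beyond any given column; it is infinite by hypothesis (3). Put
  q_{n, omega*a + c} := x_{i,j} if column c of layer a >= 1 is reserved for x_{i,j}, i < n and
  n + a is in D i j, and := 0 otherwise; put q_{n, omega*omega + m} := x_{n,m}.
  For every limit alpha <= omega*omega we cut nu_{alpha,n,m} into finite blocks on each of which
  q_{n+1} determines q_{n, alpha + m}, and let f_{alpha,n,m,k} decode it from the k-th block:
  - alpha = omega*omega: single ordinals omega*a + c with n + 1 + a in D n m, c reserved for x_{n,m};
  - alpha = omega*a, a >= 2: single ordinals omega*(a - 1) + c carrying the same entry, since
    "n + a in D i j" is unchanged when passing to row n + 1 and layer a - 1;
  - alpha = omega: entries of row n + 1 of p determining x_{i,j} (as n + 1 is in D i j), or one
    zero of that row (hypothesis (2)) when the entry is 0.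
  Choosing the blocks at omega greedily along an enumeration of all pairs (m, k) keeps them
  increasing and disjoint for different m.
*)

section \<open>Concatenating finite blocks\<close>

lemma greedy_blocks:
  fixes P :: "nat \<Rightarrow> nat list \<Rightarrow> bool"
  assumes "\<And>t M. \<exists>xs. P t xs \<and> xs \<noteq> [] \<and> (\<forall>x\<in>set xs. M \<le> x)"
  obtains B where "\<And>t. P t (B t)" "\<And>t. B t \<noteq> []" "\<And>t x. x \<in> set (B t) \<Longrightarrow> t \<le> x"
    "\<And>t t' x y. t < t' \<Longrightarrow> x \<in> set (B t) \<Longrightarrow> y \<in> set (B t') \<Longrightarrow> x < y"
proof -
  obtain pick where pick: "\<And>t M. P t (pick t M)" "\<And>t M. pick t M \<noteq> []"
    "\<And>t M x. x \<in> set (pick t M) \<Longrightarrow> M \<le> x"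
    using assms by metis
  define low where "low = rec_nat 0 (\<lambda>t l. Suc (Max (set (pick t l))))"
  define B where "B t = pick t (low t)" for t
  have low_le: "low t \<le> x" and less_low: "x < low (Suc t)" if "x \<in> set (B t)" for t x
    using that pick(3) by (auto simp: B_def low_def le_imp_less_Suc)
  have "low t < low (Suc t)" for t
  proof -
    obtain x where "x \<in> set (B t)"
      using pick(2) by (metis B_def last_in_set)
    then show ?thesis
      using low_le less_low by (meson le_less_trans)
  qed
  then have low: "strict_mono low"
    by (simp add: strict_mono_Suc_iff)
  show thesis
  proof
    show "P t (B t)" "B t \<noteq> []" for t
      using pick by (simp_all add: B_def)
    show "t \<le> x" if "x \<in> set (B t)" for t x
      using strict_mono_imp_increasing[OF low, of t] low_le[OF that] by simp
    show "x < y" if "t < t'" "x \<in> set (B t)" "y \<in> set (B t')" for t t' x y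
      using less_low[OF that(2)] strict_mono_less_eq[OF low, of "Suc t" t'] low_le[OF that(3)] that(1)
      by simp
  qed
qed

definition block_prefix :: "(nat \<Rightarrow> 'a list) \<Rightarrow> nat \<Rightarrow> 'a list" where
  "block_prefix B k = concat (map B [0..<k])"

definition block_start :: "(nat \<Rightarrow> 'a list) \<Rightarrow> nat \<Rightarrow> nat" where
  "block_start B k = length (block_prefix B k)"

(* The infinite concatenation B 0 @ B 1 @ ...: for nonempty blocks, its i-th entry already
   occurs among the first Suc i blocks. *)
definition concat_blocks :: "(nat \<Rightarrow> 'a list) \<Rightarrow> nat \<Rightarrow> 'a" where
  "concat_blocks B i = block_prefix B (Suc i) ! i"

lemma block_prefix_Suc: "block_prefix B (Suc k) = block_prefix B k @ B k"
  by (simp add: block_prefix_def)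

lemma block_prefix_add: "block_prefix B (k + d) = block_prefix B k @ concat (map B [k..<k + d])"
  by (simp add: block_prefix_def upt_add_eq_append[of 0 k d])

lemma block_start_Suc: "block_start B (Suc k) = block_start B k + length (B k)"
  by (simp add: block_start_def block_prefix_Suc)

lemma strict_mono_block_start:
  assumes "\<And>k. B k \<noteq> []"
  shows "strict_mono (block_start B)"
  using assms by (simp add: strict_mono_Suc_iff block_start_Suc)

lemma less_block_start_Suc:
  assumes "\<And>k. B k \<noteq> []"
  shows "i < block_start B (Suc i)"
proof -
  have "strict_mono (block_start B)"
    using assms by (rule strict_mono_block_start)
  then show ?thesis
    using strict_mono_imp_increasing[of "block_start B" "Suc i"] by simp
qed

lemma concat_blocks_eq_nth:
  assumes "\<And>k. B k \<noteq> []" and "i < block_start B K"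
  shows "concat_blocks B i = block_prefix B K ! i"
proof (cases "K \<le> Suc i")
  case True
  then show ?thesis
    using assms(2) block_prefix_add[of B K "Suc i - K"]
    by (simp add: concat_blocks_def block_start_def nth_append)
next
  case False
  have "i < block_start B (Suc i)"
    using assms(1) by (rule less_block_start_Suc)
  then show ?thesis
    using False block_prefix_add[of B "Suc i" "K - Suc i"]
    by (simp add: concat_blocks_def block_start_def nth_append)
qed

lemma concat_blocks_block:
  assumes "\<And>k. B k \<noteq> []"
  shows "map (concat_blocks B) [block_start B k..<block_start B (Suc k)] = B k"
proof (rule nth_equalityI)
  fix r assume "r < length (map (concat_blocks B) [block_start B k..<block_start B (Suc k)])"
  then have r: "r < length (B k)" by (simp add: block_start_Suc)
  then have "concat_blocks B (block_start B k + r) = block_prefix B (Suc k) ! (block_start B k + r)"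
    using assms by (intro concat_blocks_eq_nth) (simp_all add: block_start_Suc)
  then show "map (concat_blocks B) [block_start B k..<block_start B (Suc k)] ! r = B k ! r"
    using r by (simp add: block_start_Suc block_prefix_Suc nth_append block_start_def)
qed (simp add: block_start_Suc)

lemma range_concat_blocks:
  assumes "\<And>k. B k \<noteq> []"
  shows "range (concat_blocks B) = (\<Union>k. set (B k))"
proof
  show "range (concat_blocks B) \<subseteq> (\<Union>k. set (B k))"
  proof
    fix x assume "x \<in> range (concat_blocks B)"
    then obtain i where "x = block_prefix B (Suc i) ! i" by (auto simp: concat_blocks_def)
    moreover have "i < length (block_prefix B (Suc i))"
      using less_block_start_Suc[of B i] assms by (simp add: block_start_def)
    ultimately have "x \<in> set (block_prefix B (Suc i))"
      by simp
    then show "x \<in> (\<Union>k. set (B k))"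
      by (auto simp: block_prefix_def)
  qed
  show "(\<Union>k. set (B k)) \<subseteq> range (concat_blocks B)"
  proof (rule UN_least)
    fix k
    have "set (B k) = concat_blocks B ` set [block_start B k..<block_start B (Suc k)]"
      using concat_blocks_block[of B k] assms by (metis list.set_map)
    then show "set (B k) \<subseteq> range (concat_blocks B)"
      by blast
  qed
qed

lemma concat_blocks_sorted:
  assumes nonempty: "\<And>k. B k \<noteq> []"
    and sorted: "\<And>k. sorted_wrt R (B k)"
    and across: "\<And>k k' x y. k < k' \<Longrightarrow> x \<in> set (B k) \<Longrightarrow> y \<in> set (B k') \<Longrightarrow> R x y"
    and "i < i'"
  shows "R (concat_blocks B i) (concat_blocks B i')"
proof -
  have prefix_sorted: "sorted_wrt R (block_prefix B K)" for K
    by (induction K) (auto simp: block_prefix_Suc sorted_wrt_append sorted block_prefix_def across)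
  have "i' < block_start B (Suc i')"
    using nonempty by (rule less_block_start_Suc)
  then show ?thesis
    using concat_blocks_eq_nth[of B] nonempty sorted_wrt_nth_less[OF prefix_sorted] \<open>i < i'\<close>
    by (metis block_start_def order.strict_trans)
qed

lemma map_nth_shift: "map (\<lambda>i. xs ! (i - s)) [s..<s + length xs] = xs"
  by (rule nth_equalityI) auto

section \<open>Decoding a term from finitely many terms\<close>

lemma determined_mem: "s \<in> set ts \<Longrightarrow> determined s ts"
  unfolding determined_def by (metis (mono_tags, lifting) map_eq_conv)

lemma determined_cong_set: "set ts = set ts' \<Longrightarrow> determined s ts \<longleftrightarrow> determined s ts'"
  unfolding determined_def by (simp add: map_eq_conv)

(* Off the image of the evaluation map the decoder is True; this keeps it surjective even
   when s is the zero term, provided some t in ts is zero (decoder_surj). *)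
definition decoder :: "trm \<Rightarrow> trm list \<Rightarrow> bool list \<Rightarrow> bool" where
  "decoder s ts xs \<longleftrightarrow> (\<forall>a. map (\<lambda>t. t a) ts = xs \<longrightarrow> s a)"

lemma decoder_eval: "determined s ts \<Longrightarrow> decoder s ts (map (\<lambda>t. t a) ts) = s a"
  unfolding decoder_def determined_def by metis

lemma decoder_surj:
  assumes "determined s ts" and "\<exists>a. \<not> s a" and "(\<exists>a. s a) \<or> zero_term \<in> set ts"
  shows "\<exists>xs. length xs = length ts \<and> decoder s ts xs"
    and "\<exists>xs. length xs = length ts \<and> \<not> decoder s ts xs"
proof -
  show "\<exists>xs. length xs = length ts \<and> \<not> decoder s ts xs"
    using assms(2) decoder_eval[OF assms(1)] by (metis length_map)
  show "\<exists>xs. length xs = length ts \<and> decoder s ts xs"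
    using assms(3)
  proof
    assume "\<exists>a. s a"
    then show ?thesis
      using decoder_eval[OF assms(1)] by (metis length_map)
  next
    assume "zero_term \<in> set ts"
    then have "map (\<lambda>t. t a) ts \<noteq> replicate (length ts) True" for a
      by (metis (mono_tags) image_eqI in_set_replicate set_map zero_term_def)
    then show ?thesis
      by (auto simp: decoder_def intro!: exI[of _ "replicate (length ts) True"])
  qed
qed

section \<open>Conditions of height \<omega>\<cdot>\<omega> + 1 from coding blocks\<close>

(* B k is the k-th block of nu_{alpha,n,m}, on which block_decoder reads off q_{n, alpha + m}
   from q_{n+1}; the two clauses about truth values make that decoder surjective. *)
definition coding_blocks :: "(nat \<Rightarrow> ord \<Rightarrow> trm) \<Rightarrow> ord \<Rightarrow> nat \<Rightarrow> nat \<Rightarrow> (nat \<Rightarrow> ord list) \<Rightarrow> bool" where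
  "coding_blocks q \<alpha> n m B \<longleftrightarrow>
     (\<forall>k. B k \<noteq> [] \<and> sorted_wrt olt (B k) \<and> (\<forall>x\<in>set (B k). olt x \<alpha>)
        \<and> determined (q n (oplus \<alpha> m)) (map (q (Suc n)) (B k))
        \<and> ((\<exists>a. q n (oplus \<alpha> m) a) \<or> zero_term \<in> q (Suc n) ` set (B k)))
   \<and> (\<forall>k k' x y. k < k' \<longrightarrow> x \<in> set (B k) \<longrightarrow> y \<in> set (B k') \<longrightarrow> olt x y)
   \<and> (\<forall>\<beta>. olt \<beta> \<alpha> \<longrightarrow> (\<exists>k. \<exists>x\<in>set (B k). \<not> olt x \<beta>))
   \<and> (\<exists>a. \<not> q n (oplus \<alpha> m) a)"

definition block_decoder ::
  "(nat \<Rightarrow> ord \<Rightarrow> trm) \<Rightarrow> (ord \<Rightarrow> nat \<Rightarrow> nat \<Rightarrow> nat \<Rightarrow> ord list)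
    \<Rightarrow> ord \<Rightarrow> nat \<Rightarrow> nat \<Rightarrow> nat \<Rightarrow> (nat \<Rightarrow> bool) \<Rightarrow> bool" where
  "block_decoder q bl \<alpha> n m k \<eta> =
     decoder (q n (oplus \<alpha> m)) (map (q (Suc n)) (bl \<alpha> n m k))
       (map \<eta> [block_start (bl \<alpha> n m) k..<block_start (bl \<alpha> n m) (Suc k)])"

lemma block_decoder_surj:
  assumes "coding_blocks q \<alpha> n m (bl \<alpha> n m)"
  shows "\<exists>\<eta>. block_decoder q bl \<alpha> n m k \<eta>" and "\<exists>\<eta>. \<not> block_decoder q bl \<alpha> n m k \<eta>"
proof -
  let ?B = "bl \<alpha> n m" and ?s = "q n (oplus \<alpha> m)"
  have "\<And>k. ?B k \<noteq> []"
    using assms by (simp add: coding_blocks_def)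
  then have start: "block_start ?B (Suc k) = block_start ?B k + length (?B k)"
    by (simp add: block_start_Suc)
  have "determined ?s (map (q (Suc n)) (?B k))" "\<exists>a. \<not> ?s a"
    "(\<exists>a. ?s a) \<or> zero_term \<in> set (map (q (Suc n)) (?B k))"
    using assms by (auto simp: coding_blocks_def)
  note surj = decoder_surj[OF this]
  have realize: "block_decoder q bl \<alpha> n m k (\<lambda>i. xs ! (i - block_start ?B k))
      = decoder ?s (map (q (Suc n)) (?B k)) xs" if "length xs = length (?B k)" for xs
    using map_nth_shift[of xs "block_start ?B k"] that by (simp add: block_decoder_def start)
  show "\<exists>\<eta>. block_decoder q bl \<alpha> n m k \<eta>"
  proof -
    obtain xs where "length xs = length (?B k)" "decoder ?s (map (q (Suc n)) (?B k)) xs"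
      using surj(1) by auto
    then show ?thesis
      using realize[of xs] by auto
  qed
  show "\<exists>\<eta>. \<not> block_decoder q bl \<alpha> n m k \<eta>"
  proof -
    obtain xs where "length xs = length (?B k)" "\<not> decoder ?s (map (q (Suc n)) (?B k)) xs"
      using surj(2) by auto
    then show ?thesis
      using realize[of xs] by auto
  qed
qed

lemma concat_coding_blocks:
  assumes "coding_blocks q \<alpha> n m B"
  shows "i < i' \<Longrightarrow> olt (concat_blocks B i) (concat_blocks B i')"
    and "olt (concat_blocks B i) \<alpha>"
    and "olt \<beta> \<alpha> \<Longrightarrow> \<exists>i. \<not> olt (concat_blocks B i) \<beta>"
proof -
  have nonempty: "\<And>k. B k \<noteq> []" and sorted: "\<And>k. sorted_wrt olt (B k)"
    and below: "\<And>k x. x \<in> set (B k) \<Longrightarrow> olt x \<alpha>"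
    and across: "\<And>k k' x y. k < k' \<Longrightarrow> x \<in> set (B k) \<Longrightarrow> y \<in> set (B k') \<Longrightarrow> olt x y"
    and cofinal: "\<And>\<beta>. olt \<beta> \<alpha> \<Longrightarrow> \<exists>k. \<exists>x\<in>set (B k). \<not> olt x \<beta>"
    using assms unfolding coding_blocks_def by blast+
  have range: "range (concat_blocks B) = (\<Union>k. set (B k))"
    using nonempty by (rule range_concat_blocks)
  show "i < i' \<Longrightarrow> olt (concat_blocks B i) (concat_blocks B i')"
    using nonempty sorted across by (rule concat_blocks_sorted)
  obtain k where "concat_blocks B i \<in> set (B k)"
    using range by blast
  then show "olt (concat_blocks B i) \<alpha>"
    by (rule below)
  assume "olt \<beta> \<alpha>"
  then obtain k x where "x \<in> set (B k)" "\<not> olt x \<beta>"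
    using cofinal by blast
  moreover have "x \<in> range (concat_blocks B)"
    using range calculation(1) by blast
  ultimately show "\<exists>i. \<not> olt (concat_blocks B i) \<beta>"
    by blast
qed

lemma cond_ok_of_coding_blocks:
  assumes coding: "\<And>\<alpha> n m. is_limit \<alpha> \<Longrightarrow> olt \<alpha> ht \<Longrightarrow> coding_blocks q \<alpha> n m (bl \<alpha> n m)"
    and disjoint: "\<And>\<alpha> n m m' k k'. is_limit \<alpha> \<Longrightarrow> olt \<alpha> ht \<Longrightarrow> m \<noteq> m'
      \<Longrightarrow> set (bl \<alpha> n m k) \<inter> set (bl \<alpha> n m' k') = {}"
  shows "cond_ok ht (\<lambda>\<alpha> n m. concat_blocks (bl \<alpha> n m)) (\<lambda>\<alpha> n m. block_start (bl \<alpha> n m))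
    (block_decoder q bl)"
  unfolding cond_ok_def
proof (intro allI impI conjI)
  fix \<alpha> n m assume "is_limit \<alpha> \<and> olt \<alpha> ht"
  then have c: "coding_blocks q \<alpha> n m (bl \<alpha> n m)" by (simp add: coding)
  let ?B = "bl \<alpha> n m"
  show "olt (concat_blocks ?B i) (concat_blocks ?B i')" if "i < i'" for i i'
    using c that by (rule concat_coding_blocks(1))
  show "olt (concat_blocks ?B i) \<alpha>" for i
    using c by (rule concat_coding_blocks(2))
  show "\<exists>i. \<not> olt (concat_blocks ?B i) \<beta>" if "olt \<beta> \<alpha>" for \<beta>
    using c that by (rule concat_coding_blocks(3))
  show "strict_mono (block_start ?B)"
    using c by (intro strict_mono_block_start) (simp add: coding_blocks_def)
  show "block_decoder q bl \<alpha> n m k \<eta> = block_decoder q bl \<alpha> n m k \<eta>'"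
    if "\<forall>i. block_start ?B k \<le> i \<and> i < block_start ?B (Suc k) \<longrightarrow> \<eta> i = \<eta>' i"
    for k \<eta> \<eta>'
  proof -
    have "map \<eta> [block_start ?B k..<block_start ?B (Suc k)] = map \<eta>' [block_start ?B k..<block_start ?B (Suc k)]"
      using that by (intro map_cong) auto
    then show ?thesis
      unfolding block_decoder_def by (rule arg_cong)
  qed
  show "\<exists>\<eta>. block_decoder q bl \<alpha> n m k \<eta>" "\<exists>\<eta>. \<not> block_decoder q bl \<alpha> n m k \<eta>" for k
    using c by (rule block_decoder_surj)+
next
  fix \<alpha> n and m m' :: nat assume limit: "is_limit \<alpha> \<and> olt \<alpha> ht" and "m \<noteq> m'"
  then have "\<And>k. bl \<alpha> n m k \<noteq> []" "\<And>k. bl \<alpha> n m' k \<noteq> []"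
    using coding by (simp_all add: coding_blocks_def)
  then have "range (concat_blocks (bl \<alpha> n m)) = (\<Union>k. set (bl \<alpha> n m k))"
    "range (concat_blocks (bl \<alpha> n m')) = (\<Union>k. set (bl \<alpha> n m' k))"
    by (simp_all add: range_concat_blocks)
  moreover have "set (bl \<alpha> n m k) \<inter> set (bl \<alpha> n m' k') = {}" for k k'
    using limit \<open>m \<noteq> m'\<close> by (simp add: disjoint)
  ultimately show "range (concat_blocks (bl \<alpha> n m)) \<inter> range (concat_blocks (bl \<alpha> n m')) = {}"
    by blast
qed

lemma coding_blocks_equation:
  assumes "coding_blocks q \<alpha> n m (bl \<alpha> n m)"
  shows "q n (oplus \<alpha> m) a
    = gfun (\<lambda>\<alpha> n m. concat_blocks (bl \<alpha> n m)) (block_decoder q bl) \<alpha> n m k (\<lambda>\<zeta>. q (Suc n) \<zeta> a)"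
proof -
  let ?B = "bl \<alpha> n m" and ?ts = "map (q (Suc n)) (bl \<alpha> n m k)"
  have "\<And>k. ?B k \<noteq> []"
    using assms by (simp add: coding_blocks_def)
  then have "map (concat_blocks ?B) [block_start ?B k..<block_start ?B (Suc k)] = ?B k"
    by (rule concat_blocks_block)
  from arg_cong[OF this, of "map (\<lambda>x. q (Suc n) x a)"]
  have "map (\<lambda>i. q (Suc n) (concat_blocks ?B i) a) [block_start ?B k..<block_start ?B (Suc k)]
      = map (\<lambda>t. t a) ?ts"
    by (simp add: comp_def)
  then have "gfun (\<lambda>\<alpha> n m. concat_blocks (bl \<alpha> n m)) (block_decoder q bl) \<alpha> n m k (\<lambda>\<zeta>. q (Suc n) \<zeta> a)
      = decoder (q n (oplus \<alpha> m)) ?ts (map (\<lambda>t. t a) ?ts)"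
    by (simp add: gfun_def block_decoder_def)
  also have "\<dots> = q n (oplus \<alpha> m) a"
  proof (rule decoder_eval)
    show "determined (q n (oplus \<alpha> m)) ?ts"
      using assms by (simp add: coding_blocks_def)
  qed
  finally show ?thesis ..
qed

lemma coding_blocks_singleton:
  assumes mono: "\<And>k k'. k < k' \<Longrightarrow> olt (x k) (x k')"
    and below: "\<And>k. olt (x k) \<alpha>"
    and cofinal: "\<And>\<beta>. olt \<beta> \<alpha> \<Longrightarrow> \<exists>k. \<not> olt (x k) \<beta>"
    and repeat: "\<And>k. q (Suc n) (x k) = q n (oplus \<alpha> m)"
    and "\<exists>a. \<not> q n (oplus \<alpha> m) a"
    and "(\<exists>a. q n (oplus \<alpha> m) a) \<or> q n (oplus \<alpha> m) = zero_term"
  shows "coding_blocks q \<alpha> n m (\<lambda>k. [x k])"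
  unfolding coding_blocks_def using assms by (auto intro: determined_mem)

lemma coding_blocks_omega:
  assumes nonempty: "\<And>k. D k \<noteq> []" and sorted: "\<And>k. sorted_wrt (<) (D k)"
    and across: "\<And>k k' x y. k < k' \<Longrightarrow> x \<in> set (D k) \<Longrightarrow> y \<in> set (D k') \<Longrightarrow> x < y"
    and large: "\<And>k x. x \<in> set (D k) \<Longrightarrow> k \<le> x"
    and determined: "\<And>k. determined (q n (Fin 1 m)) (map (\<lambda>x. q (Suc n) (Fin 0 x)) (D k))"
    and zero: "\<And>k. (\<exists>a. q n (Fin 1 m) a) \<or> zero_term \<in> (\<lambda>x. q (Suc n) (Fin 0 x)) ` set (D k)"
    and "\<exists>a. \<not> q n (Fin 1 m) a"
  shows "coding_blocks q (Fin 1 0) n m (\<lambda>k. map (Fin 0) (D k))"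
  unfolding coding_blocks_def
proof (intro conjI allI impI ballI)
  fix k
  show "map (Fin 0) (D k) \<noteq> []" "sorted_wrt olt (map (Fin 0) (D k))"
    using nonempty sorted by (simp_all add: sorted_wrt_map)
  show "olt x (Fin 1 0)" if "x \<in> set (map (Fin 0) (D k))" for x
    using that by auto
  show "determined (q n (oplus (Fin 1 0) m)) (map (q (Suc n)) (map (Fin 0) (D k)))"
    using determined by (simp add: comp_def)
  show "(\<exists>a. q n (oplus (Fin 1 0) m) a) \<or> zero_term \<in> q (Suc n) ` set (map (Fin 0) (D k))"
    using zero by (simp add: image_image)
next
  fix k k' x y
  assume "k < k'" "x \<in> set (map (Fin 0) (D k))" "y \<in> set (map (Fin 0) (D k'))"
  then show "olt x y"
    using across by auto
next
  fix \<beta> assume "olt \<beta> (Fin 1 0)"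
  then obtain d where "\<beta> = Fin 0 d"
    by (cases \<beta>) auto
  moreover obtain x where "x \<in> set (D d)"
    using nonempty by (meson list.set_sel(1))
  moreover have "d \<le> x"
    using large calculation(2) .
  ultimately show "\<exists>k. \<exists>x\<in>set (map (Fin 0) (D k)). \<not> olt x \<beta>"
    by (intro exI[of _ d] bexI[of _ "Fin 0 x"]) auto
qed (use assms in simp)

lemma in_R_delta_omega_of_coding_blocks:
  assumes terms: "\<And>n \<alpha>. is_term (q n \<alpha>)"
    and top: "\<And>n m. q n (Top m) = var n m"
    and dep: "\<And>n a m. depends_only (q n (Fin a m)) {(l, k). l < n}"
    and coding: "\<And>\<alpha> n m. is_limit \<alpha> \<Longrightarrow> olt \<alpha> (Top 1) \<Longrightarrow> coding_blocks q \<alpha> n m (bl \<alpha> n m)"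
    and disjoint: "\<And>\<alpha> n m m' k k'. is_limit \<alpha> \<Longrightarrow> olt \<alpha> (Top 1) \<Longrightarrow> m \<noteq> m'
      \<Longrightarrow> set (bl \<alpha> n m k) \<inter> set (bl \<alpha> n m' k') = {}"
  shows "in_R_delta_omega (\<lambda>\<alpha> n m. concat_blocks (bl \<alpha> n m)) (\<lambda>\<alpha> n m. block_start (bl \<alpha> n m))
    (block_decoder q bl) q"
  unfolding in_R_delta_omega_def
proof (intro conjI allI impI)
  show "cond_ok (oplus delta 1) (\<lambda>\<alpha> n m. concat_blocks (bl \<alpha> n m))
      (\<lambda>\<alpha> n m. block_start (bl \<alpha> n m)) (block_decoder q bl)"
    using coding disjoint by (simp add: cond_ok_of_coding_blocks)
  show "depends_only (q n \<alpha>) {(l, k). l < n}" if "olt \<alpha> delta" for n \<alpha>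
    using that dep by (cases \<alpha>) auto
  show "\<exists>k0. \<forall>a k. k0 \<le> k \<longrightarrow> q n (oplus \<alpha> m) a
      = gfun (\<lambda>\<alpha> n m. concat_blocks (bl \<alpha> n m)) (block_decoder q bl) \<alpha> n m k (\<lambda>\<zeta>. q (Suc n) \<zeta> a)"
    if "is_limit \<alpha> \<and> \<not> olt delta \<alpha>" for n m \<alpha>
  proof -
    have "olt \<alpha> (Top 1)"
      using that by (cases \<alpha>) auto
    then show ?thesis
      using that coding coding_blocks_equation by blast
  qed
qed (simp_all add: terms top)

section \<open>Extending the matrix\<close>

definition determining_rows :: "(nat \<Rightarrow> nat \<Rightarrow> trm) \<Rightarrow> nat \<Rightarrow> nat \<Rightarrow> nat set" where
  "determining_rows p i j =
     {n. \<forall>M. \<exists>ms. ms \<noteq> [] \<and> (\<forall>m\<in>set ms. M < m) \<and> determined (var i j) (map (p n) ms)}"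

lemma prod_encode_less_snd_iff [simp]: "prod_encode (m, k) < prod_encode (m, k') \<longleftrightarrow> k < k'"
proof -
  have "strict_mono (\<lambda>k. prod_encode (m, k))"
    by (simp add: strict_mono_Suc_iff prod_encode_def)
  then show ?thesis
    by (rule strict_mono_less)
qed

(* Columns of the layers omega*a + c with a >= 1: column (Some (i, j)) x is the x-th of
   infinitely many columns reserved for x_{i,j}, and column None x carries the zero term. *)
definition column :: "(nat \<times> nat) option \<Rightarrow> nat \<Rightarrow> nat" where
  "column v x = prod_encode (case v of None \<Rightarrow> 0 | Some ij \<Rightarrow> Suc (prod_encode ij), x)"

definition column_var :: "nat \<Rightarrow> (nat \<times> nat) option" where
  "column_var c = (case fst (prod_decode c) of 0 \<Rightarrow> None | Suc ij \<Rightarrow> Some (prod_decode ij))"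

lemma column_var_column [simp]: "column_var (column v x) = v"
  by (cases v) (simp_all add: column_def column_var_def)

lemma column_eq_iff [simp]: "column v x = column v' x' \<longleftrightarrow> v = v' \<and> x = x'"
  by (metis column_def column_var_column prod.inject prod_encode_eq)

lemma le_column: "x \<le> column v x"
  unfolding column_def by (rule le_prod_encode_2)

lemma column_less_iff [simp]: "column v x < column v x' \<longleftrightarrow> x < x'"
  by (simp add: column_def)

definition var_term :: "(nat \<times> nat) option \<Rightarrow> trm" where
  "var_term v = (case v of None \<Rightarrow> zero_term | Some (i, j) \<Rightarrow> var i j)"

lemma var_term_False: "\<not> var_term v (\<lambda>_ _. False)"
  by (auto simp: var_term_def zero_term_def var_def split: option.split)

lemma var_term_True: "var_term v (\<lambda>_ _. True) \<or> var_term v = zero_term"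
  by (auto simp: var_term_def var_def split: option.split)

lemma depends_only_var_term: "depends_only (var_term v) (set_option v)"
proof (cases v)
  case None
  then show ?thesis
    unfolding depends_only_def term_of_def var_term_def zero_term_def
    by (intro exI[of _ "[]"] exI[of _ "\<lambda>_. False"]) simp
next
  case (Some ij)
  then show ?thesis
    unfolding depends_only_def term_of_def var_term_def var_def
    by (intro exI[of _ "[ij]"] exI[of _ hd]) (auto split: prod.split)
qed

lemma depends_only_mono: "depends_only t Y \<Longrightarrow> Y \<subseteq> Z \<Longrightarrow> depends_only t Z"
  unfolding depends_only_def by blast

lemma is_term_if_depends_only: "depends_only t Y \<Longrightarrow> is_term t"
  unfolding depends_only_def is_term_def by blast

locale term_matrix =
  fixes p :: "nat \<Rightarrow> nat \<Rightarrow> trm"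
  assumes dep: "\<forall>n m. depends_only (p n m) {(i, j). i < n}"
    and zeros: "\<forall>n. infinite {m. p n m = zero_term}"
    and det: "\<forall>i j. infinite {n. \<forall>M. \<exists>ms. ms \<noteq> [] \<and> (\<forall>m\<in>set ms. M < m)
                              \<and> determined (var i j) (map (p n) ms)}"
begin

lemma infinite_determining_rows: "infinite (determining_rows p i j)"
  using det unfolding determining_rows_def by blast

definition layer_var :: "nat \<Rightarrow> nat \<Rightarrow> nat \<Rightarrow> (nat \<times> nat) option" where
  "layer_var n a c = (case column_var c of
     Some (i, j) \<Rightarrow> if i < n \<and> n + a \<in> determining_rows p i j then Some (i, j) else None
   | None \<Rightarrow> None)"

lemma layer_var_SomeD: "layer_var n a c = Some (i, j) \<Longrightarrow> i < n \<and> n + a \<in> determining_rows p i j"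
  by (auto simp: layer_var_def split: option.splits if_splits)

lemma layer_var_column_Suc:
  "layer_var (Suc n) a (column (layer_var n (Suc a) c) x) = layer_var n (Suc a) c"
proof (cases "layer_var n (Suc a) c")
  case None
  then show ?thesis
    by (simp add: layer_var_def)
next
  case (Some ij)
  then obtain i j where ij: "layer_var n (Suc a) c = Some (i, j)"
    by (cases ij) auto
  then have "i < n" "n + Suc a \<in> determining_rows p i j"
    using layer_var_SomeD[OF ij] by simp_all
  then show ?thesis
    using ij by (simp add: layer_var_def)
qed

lemma layer_var_column_top:
  "Suc n + a \<in> determining_rows p n m \<Longrightarrow> layer_var (Suc n) a (column (Some (n, m)) x) = Some (n, m)"
  by (simp add: layer_var_def)

fun q_ext :: "nat \<Rightarrow> ord \<Rightarrow> trm" where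
  "q_ext n (Fin a m) = (if a = 0 then p n m else var_term (layer_var n a m))"
| "q_ext n (Top m) = var n m"

definition decodes :: "nat \<Rightarrow> nat \<Rightarrow> nat list \<Rightarrow> bool" where
  "decodes n c xs \<longleftrightarrow> sorted_wrt (<) xs
     \<and> determined (var_term (layer_var n 1 c)) (map (p (Suc n)) xs)
     \<and> ((\<exists>a. var_term (layer_var n 1 c) a) \<or> zero_term \<in> p (Suc n) ` set xs)"

lemma decodes_exists: "\<exists>xs. decodes n c xs \<and> xs \<noteq> [] \<and> (\<forall>x\<in>set xs. M \<le> x)"
proof (cases "layer_var n 1 c")
  case None
  have "infinite {m. p (Suc n) m = zero_term}"
    using zeros by blast
  then obtain z where "M \<le> z" "p (Suc n) z = zero_term"
    unfolding infinite_nat_iff_unbounded_le by blast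
  then show ?thesis
    using None by (intro exI[of _ "[z]"]) (simp add: decodes_def var_term_def determined_mem)
next
  case (Some ij)
  then obtain i j where ij: "layer_var n 1 c = Some (i, j)"
    by (cases ij) auto
  then have "Suc n \<in> determining_rows p i j"
    using layer_var_SomeD[OF ij] by simp
  then obtain ms where ms: "ms \<noteq> []" "\<forall>m\<in>set ms. M < m" "determined (var i j) (map (p (Suc n)) ms)"
    unfolding determining_rows_def by blast
  define xs where "xs = sorted_list_of_set (set ms)"
  have "set xs = set ms"
    by (simp add: xs_def)
  moreover have "sorted_wrt (<) xs"
    by (simp add: xs_def strict_sorted_iff)
  moreover have "var i j (\<lambda>_ _. True)"
    by (simp add: var_def)
  ultimately show ?thesis
    using ms ij determined_cong_set[of "map (p (Suc n)) xs" "map (p (Suc n)) ms"]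
    by (intro exI[of _ xs]) (auto simp: decodes_def var_term_def)
qed

(* Block t serves column fst (prod_decode t); since t = prod_encode (m, k) runs through all
   pairs, choosing greedily along t makes the blocks of different columns disjoint. *)
definition decoding_blocks :: "nat \<Rightarrow> nat \<Rightarrow> nat list" where
  "decoding_blocks n = (SOME B.
     (\<forall>t. decodes n (fst (prod_decode t)) (B t) \<and> B t \<noteq> [] \<and> (\<forall>x\<in>set (B t). t \<le> x))
     \<and> (\<forall>t t' x y. t < t' \<longrightarrow> x \<in> set (B t) \<longrightarrow> y \<in> set (B t') \<longrightarrow> x < y))"

lemma decoding_blocks:
  shows "decodes n (fst (prod_decode t)) (decoding_blocks n t)" and "decoding_blocks n t \<noteq> []"
    and "x \<in> set (decoding_blocks n t) \<Longrightarrow> t \<le> x"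
    and "t < t' \<Longrightarrow> x \<in> set (decoding_blocks n t) \<Longrightarrow> y \<in> set (decoding_blocks n t') \<Longrightarrow> x < y"
proof -
  have "\<exists>B. (\<forall>t. decodes n (fst (prod_decode t)) (B t) \<and> B t \<noteq> [] \<and> (\<forall>x\<in>set (B t). t \<le> x))
     \<and> (\<forall>t t' x y. t < t' \<longrightarrow> x \<in> set (B t) \<longrightarrow> y \<in> set (B t') \<longrightarrow> x < y)"
  proof -
    obtain B where "\<And>t. decodes n (fst (prod_decode t)) (B t)" "\<And>t. B t \<noteq> []"
      "\<And>t x. x \<in> set (B t) \<Longrightarrow> t \<le> x"
      "\<And>t t' x y. t < t' \<Longrightarrow> x \<in> set (B t) \<Longrightarrow> y \<in> set (B t') \<Longrightarrow> x < y"
      using decodes_exists by (rule greedy_blocks[where P = "\<lambda>t. decodes n (fst (prod_decode t))"]) blast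
    then show ?thesis by blast
  qed
  from someI_ex[OF this, folded decoding_blocks_def]
  show "decodes n (fst (prod_decode t)) (decoding_blocks n t)" "decoding_blocks n t \<noteq> []"
    "x \<in> set (decoding_blocks n t) \<Longrightarrow> t \<le> x"
    "t < t' \<Longrightarrow> x \<in> set (decoding_blocks n t) \<Longrightarrow> y \<in> set (decoding_blocks n t') \<Longrightarrow> x < y"
    by blast+
qed

definition top_layer :: "nat \<Rightarrow> nat \<Rightarrow> nat \<Rightarrow> nat" where
  "top_layer n m = enumerate {a. 0 < a \<and> Suc n + a \<in> determining_rows p n m}"

lemma top_layer:
  shows "0 < top_layer n m k" and "Suc n + top_layer n m k \<in> determining_rows p n m"
    and "strict_mono (top_layer n m)"
proof -
  let ?S = "{a. 0 < a \<and> Suc n + a \<in> determining_rows p n m}"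
  have "\<exists>a\<ge>M. a \<in> ?S" for M
  proof -
    obtain r where "Suc n + Suc M \<le> r" "r \<in> determining_rows p n m"
      using infinite_determining_rows unfolding infinite_nat_iff_unbounded_le by blast
    then show ?thesis
      by (intro exI[of _ "r - Suc n"]) auto
  qed
  then have "infinite ?S"
    unfolding infinite_nat_iff_unbounded_le by blast
  then show "0 < top_layer n m k" "Suc n + top_layer n m k \<in> determining_rows p n m"
    "strict_mono (top_layer n m)"
    using enumerate_in_set[of ?S k] strict_mono_enumerate[of ?S] by (simp_all add: top_layer_def)
qed

definition blocks :: "ord \<Rightarrow> nat \<Rightarrow> nat \<Rightarrow> nat \<Rightarrow> ord list" where
  "blocks \<alpha> n m k = (case \<alpha> of
     Top _ \<Rightarrow> [Fin (top_layer n m k) (column (Some (n, m)) 0)]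
   | Fin a _ \<Rightarrow> if a = 1 then map (Fin 0) (decoding_blocks n (prod_encode (m, k)))
               else [Fin (a - 1) (column (layer_var n a m) (prod_encode (m, k)))])"

lemma coding_blocks_top: "coding_blocks q_ext (Top 0) n m (blocks (Top 0) n m)"
proof -
  have "blocks (Top 0) n m = (\<lambda>k. [Fin (top_layer n m k) (column (Some (n, m)) 0)])"
    by (simp add: blocks_def fun_eq_iff)
  moreover have "coding_blocks q_ext (Top 0) n m (\<lambda>k. [Fin (top_layer n m k) (column (Some (n, m)) 0)])"
  proof (rule coding_blocks_singleton)
    show "olt (Fin (top_layer n m k) (column (Some (n, m)) 0)) (Fin (top_layer n m k') (column (Some (n, m)) 0))"
      if "k < k'" for k k'
      using that top_layer(3) by (simp add: strict_mono_less)
    show "\<exists>k. \<not> olt (Fin (top_layer n m k) (column (Some (n, m)) 0)) \<beta>" if \<beta>: "olt \<beta> (Top 0)" for \<beta>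
    proof -
      obtain c d where "\<beta> = Fin c d"
        using \<beta> by (cases \<beta>) auto
      moreover have "Suc c \<le> top_layer n m (Suc c)"
        using top_layer(3) by (rule strict_mono_imp_increasing)
      ultimately show ?thesis
        by (intro exI[of _ "Suc c"]) auto
    qed
    show "q_ext (Suc n) (Fin (top_layer n m k) (column (Some (n, m)) 0)) = q_ext n (oplus (Top 0) m)" for k
    proof -
      have "top_layer n m k \<noteq> 0"
        using top_layer(1)[of n m k] by simp
      then show ?thesis
        using top_layer(2) by (simp add: layer_var_column_top var_term_def)
    qed
    show "\<exists>a. \<not> q_ext n (oplus (Top 0) m) a" "(\<exists>a. q_ext n (oplus (Top 0) m) a) \<or> q_ext n (oplus (Top 0) m) = zero_term"
      by (auto simp: var_def)
  qed simp
  ultimately show ?thesis by simp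
qed

lemma coding_blocks_layer:
  assumes "1 < a"
  shows "coding_blocks q_ext (Fin a 0) n m (blocks (Fin a 0) n m)"
proof -
  let ?x = "\<lambda>k. Fin (a - 1) (column (layer_var n a m) (prod_encode (m, k)))"
  have "blocks (Fin a 0) n m = (\<lambda>k. [?x k])"
    using assms by (simp add: blocks_def fun_eq_iff)
  moreover have "coding_blocks q_ext (Fin a 0) n m (\<lambda>k. [?x k])"
  proof (rule coding_blocks_singleton)
    show "olt (?x k) (?x k')" if "k < k'" for k k'
      using that by simp
    show "olt (?x k) (Fin a 0)" for k
      using assms by simp
    show "\<exists>k. \<not> olt (?x k) \<beta>" if \<beta>: "olt \<beta> (Fin a 0)" for \<beta>
    proof -
      obtain c d where "\<beta> = Fin c d" "c < a"
        using \<beta> by (cases \<beta>) auto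
      moreover have "d \<le> column (layer_var n a m) (prod_encode (m, d))"
        using le_column le_prod_encode_2 order_trans by blast
      ultimately show ?thesis
        by (intro exI[of _ d]) auto
    qed
    have "Suc (a - 1) = a"
      using assms by simp
    then show "q_ext (Suc n) (?x k) = q_ext n (oplus (Fin a 0) m)" for k
      using assms layer_var_column_Suc[of n "a - 1" m] by simp
    show "\<exists>a'. \<not> q_ext n (oplus (Fin a 0) m) a'"
      using assms var_term_False by auto
    show "(\<exists>a'. q_ext n (oplus (Fin a 0) m) a') \<or> q_ext n (oplus (Fin a 0) m) = zero_term"
      using assms var_term_True by auto
  qed
  ultimately show ?thesis by simp
qed

lemma coding_blocks_layer_one: "coding_blocks q_ext (Fin 1 0) n m (blocks (Fin 1 0) n m)"
proof -
  let ?D = "\<lambda>k. decoding_blocks n (prod_encode (m, k))"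
  have "blocks (Fin 1 0) n m = (\<lambda>k. map (Fin 0) (?D k))"
    by (simp add: blocks_def fun_eq_iff)
  moreover have "coding_blocks q_ext (Fin 1 0) n m (\<lambda>k. map (Fin 0) (?D k))"
  proof (rule coding_blocks_omega)
    have "decodes n m (?D k)" for k
      using decoding_blocks(1)[of n "prod_encode (m, k)"] by simp
    then show "sorted_wrt (<) (?D k)"
      "determined (q_ext n (Fin 1 m)) (map (\<lambda>x. q_ext (Suc n) (Fin 0 x)) (?D k))"
      "(\<exists>a. q_ext n (Fin 1 m) a) \<or> zero_term \<in> (\<lambda>x. q_ext (Suc n) (Fin 0 x)) ` set (?D k)" for k
      by (simp_all add: decodes_def)
    show "x < y" if "k < k'" "x \<in> set (?D k)" "y \<in> set (?D k')" for k k' x y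
      using that decoding_blocks(4)[where t = "prod_encode (m, k)" and t' = "prod_encode (m, k')"]
      by simp
    show "k \<le> x" if "x \<in> set (?D k)" for k x
      using le_prod_encode_2 decoding_blocks(3)[OF that] by (rule order_trans)
    show "\<exists>a. \<not> q_ext n (Fin 1 m) a"
      using var_term_False by auto
  qed (rule decoding_blocks(2))
  ultimately show ?thesis by simp
qed

lemma coding_blocks_limit:
  assumes "is_limit \<alpha>" and "olt \<alpha> (Top 1)"
  shows "coding_blocks q_ext \<alpha> n m (blocks \<alpha> n m)"
proof (cases \<alpha>)
  case (Fin a b)
  then have "\<alpha> = Fin a 0" "0 < a"
    using assms(1) by simp_all
  then show ?thesis
    using coding_blocks_layer_one coding_blocks_layer[of a] by (cases "a = 1") simp_all
next
  case (Top b)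
  then show ?thesis
    using assms coding_blocks_top by simp
qed

lemma blocks_disjoint:
  assumes "is_limit \<alpha>" and "olt \<alpha> (Top 1)" and "m \<noteq> m'"
  shows "set (blocks \<alpha> n m k) \<inter> set (blocks \<alpha> n m' k') = {}"
proof (cases \<alpha>)
  case (Fin a b)
  show ?thesis
  proof (cases "a = 1")
    case True
    have "prod_encode (m, k) \<noteq> prod_encode (m', k')"
      using assms(3) by simp
    then have "set (decoding_blocks n (prod_encode (m, k))) \<inter> set (decoding_blocks n (prod_encode (m', k'))) = {}"
      using decoding_blocks(4) by (metis disjoint_iff less_asym' nat_neq_iff)
    then show ?thesis
      using Fin True by (auto simp: blocks_def)
  next
    case False
    then show ?thesis
      using Fin assms(3) by (simp add: blocks_def)
  qed
next
  case (Top b)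
  then show ?thesis
    using assms(3) by (simp add: blocks_def)
qed

lemma q_ext_in_R_delta_omega:
  "in_R_delta_omega (\<lambda>\<alpha> n m. concat_blocks (blocks \<alpha> n m)) (\<lambda>\<alpha> n m. block_start (blocks \<alpha> n m))
     (block_decoder q_ext blocks) q_ext"
proof (rule in_R_delta_omega_of_coding_blocks)
  show dep_q: "depends_only (q_ext n (Fin a m)) {(l, k). l < n}" for n a m
  proof (cases "a = 0")
    case True
    then show ?thesis using dep by simp
  next
    case False
    have "set_option (layer_var n a m) \<subseteq> {(l, k). l < n}"
      by (auto dest: layer_var_SomeD)
    with False show ?thesis
      using depends_only_mono[OF depends_only_var_term] by simp
  qed
  show "is_term (q_ext n \<alpha>)" for n \<alpha>
  proof (cases \<alpha>)
    case (Fin a m)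
    then show ?thesis
      using is_term_if_depends_only[OF dep_q[of n a m]] by simp
  next
    case (Top m)
    then show ?thesis
      using is_term_if_depends_only[OF depends_only_var_term[of "Some (n, m)"]] by (simp add: var_term_def)
  qed
qed (simp_all add: coding_blocks_limit blocks_disjoint)

end

theorem mainTheorem16:
  fixes p :: "nat \<Rightarrow> nat \<Rightarrow> trm"
  assumes dep: "\<forall>n m. depends_only (p n m) {(i, j). i < n}"
    and zeros: "\<forall>n. infinite {m. p n m = zero_term}"
    and det: "\<forall>i j. infinite {n. \<forall>M. \<exists>ms. ms \<noteq> [] \<and> (\<forall>m\<in>set ms. M < m)
                              \<and> determined (var i j) (map (p n) ms)}"
  shows "\<exists>\<nu> j f q. in_R_delta_omega \<nu> j f q \<and> (\<forall>n m. q n (Fin 0 m) = p n m)"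
proof -
  interpret term_matrix p
    using assms by unfold_locales
  have "q_ext n (Fin 0 m) = p n m" for n m
    by simp
  then show ?thesis
    using q_ext_in_R_delta_omega by blast
qed

end
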